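(* For each $i\in\{1,\dots,n\}$ let a linear basis warp be given by a feature map $\beta_i:\mathbb{R}^d\to\mathbb{R}^{l_i}$, a regularization matrix $Z_i\in\mathbb{R}^{k_i\times l_i}$ and a weight $\mu_i\ge0$, and let $D_i\in\mathbb{R}^{d\times m}$ be a datum shape with $\mathcal{B}_i=\mathcal{B}_i(D_i)$, such that $M_i=\mathcal{B}_i\mathcal{B}_i^{\top}+\mu_iZ_i^{\top}Z_i$ is invertible. Suppose each of these warps contains free-translations. Then, with $Q_i=\mathcal{B}_i^{\top}M_i^{-1}\mathcal{B}_i$, $\mathcal{Q}_{II}=\sum_iQ_i$ and $\mathcal{P}_{II}=nI_m-\mathcal{Q}_{II}$, all of the following hold: $\mathcal{P}_{II}\mathbf{1}=0$; $\mathcal{Q}_{II}\mathbf{1}=n\mathbf{1}$; $Q_i\mathbf{1}=\mathbf{1}$ for all $i$; $\mathrm{tr}((S+t\mathbf{1}^{\top})\mathcal{P}_{II}(S+t\mathbf{1}^{\top})^{\top})=\mathrm{tr}(S\mathcal{P}_{II}S^{\top})$ for all $S\in\mathbb{R}^{d\times m}$, $t\in\mathbb{R}^d$; and for every $i$ there is $x_i$ with $\mathcal{B}_i^{\top}x_i=\mathbf{1}$ and, if $\mu_i>0$, $Z_ix_i=0$.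
   Context: A linear basis warp (LBW) with feature map $\beta:\mathbb{R}^d\to\mathbb{R}^l$ is the map $p\mapsto W^{\top}\beta(p)$ with parameter $W\in\mathbb{R}^{l\times d}$, regularized by $\mu\|ZW\|_F^2$. For a point cloud $D=[p_1,\dots,p_m]\in\mathbb{R}^{d\times m}$, $\mathcal{B}(D)=[\beta(p_1),\dots,\beta(p_m)]\in\mathbb{R}^{l\times m}$. The LBW $(\beta,Z,\mu)$ contains free-translations if there exists $x\in\mathbb{R}^l$, independent of the input, with $\beta(p)^{\top}x=1$ for all $p\in\mathbb{R}^d$ (i.e. $\mathcal{B}(D)^{\top}x=\mathbf{1}$ for every point cloud $D$), and, if $\mu>0$, additionally $Zx=0$. $\mathbf{1}$ denotes the all-ones vector. *)

theory Defs
  imports "Jordan_Normal_Form.Matrix"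
begin

definition mat_trace :: "real mat \<Rightarrow> real" where
  "mat_trace A = (\<Sum>i<dim_row A. A $$ (i, i))"

definition mat_inv :: "real mat \<Rightarrow> real mat" where
  "mat_inv A = (SOME B. inverts_mat A B \<and> inverts_mat B A)"

definition ones_vec :: "nat \<Rightarrow> real vec" where
  "ones_vec m = vec m (\<lambda>_. 1)"

definition basis_mat :: "nat \<Rightarrow> (real vec \<Rightarrow> real vec) \<Rightarrow> real mat \<Rightarrow> real mat" where
  "basis_mat l \<beta> D = mat l (dim_col D) (\<lambda>(r, c). \<beta> (col D c) $ r)"

definition contains_free_translations ::
  "nat \<Rightarrow> nat \<Rightarrow> nat \<Rightarrow> (real vec \<Rightarrow> real vec) \<Rightarrow> real mat \<Rightarrow> real \<Rightarrow> bool" where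
  "contains_free_translations d l k \<beta> Z \<mu> \<longleftrightarrow>
     (\<exists>x \<in> carrier_vec l. (\<forall>p \<in> carrier_vec d. \<beta> p \<bullet> x = 1) \<and>
        (\<mu> > 0 \<longrightarrow> Z *\<^sub>v x = 0\<^sub>v k))"

end

theory Submission
  imports Defs
begin

text \<open>
  A free translation \<open>x\<close> of a warp is annihilated by its regulariser, so
  \<open>M x = B B\<^sup>T x = B \<one>\<close>, i.e. \<open>M\<^sup>-\<^sup>1 B \<one> = x\<close> and \<open>Q \<one> = B\<^sup>T x = \<one>\<close>.
  Since \<open>M\<close> is symmetric, so are \<open>M\<^sup>-\<^sup>1\<close> and \<open>Q\<close>; hence \<open>P\<^sub>I\<^sub>I\<close> annihilates \<open>\<one>\<close> from
  both sides, and the translation \<open>t \<one>\<^sup>T\<close> drops out of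
  \<open>(S + t \<one>\<^sup>T) P\<^sub>I\<^sub>I (S + t \<one>\<^sup>T)\<^sup>T\<close> already before the trace is taken.
\<close>

lemma ones_vec_carrier [simp]: "ones_vec m \<in> carrier_vec m"
  and dim_ones_vec [simp]: "dim_vec (ones_vec m) = m"
  and index_ones_vec [simp]: "i < m \<Longrightarrow> ones_vec m $ i = 1"
  by (simp_all add: ones_vec_def)

lemma invertible_mat_inv:
  assumes M: "M \<in> carrier_mat n n" and inv: "invertible_mat M"
  shows mat_inv_carrier_mat: "mat_inv M \<in> carrier_mat n n"
    and mat_inv_mult_left: "mat_inv M * M = 1\<^sub>m n"
    and mat_inv_mult_right: "M * mat_inv M = 1\<^sub>m n"
proof -
  have "\<exists>A. inverts_mat M A \<and> inverts_mat A M"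
    using inv unfolding invertible_mat_def by blast
  then have "inverts_mat M (mat_inv M) \<and> inverts_mat (mat_inv M) M"
    unfolding mat_inv_def by (rule someI_ex)
  then have right: "M * mat_inv M = 1\<^sub>m n" and left: "mat_inv M * M = 1\<^sub>m (dim_row (mat_inv M))"
    using M unfolding inverts_mat_def by auto
  have "dim_row (mat_inv M) = n" "dim_col (mat_inv M) = n"
    using left right M by (metis carrier_matD(2) index_mult_mat(3) index_one_mat(3))+
  then show "mat_inv M \<in> carrier_mat n n" "mat_inv M * M = 1\<^sub>m n" "M * mat_inv M = 1\<^sub>m n"
    using left right by auto
qed

lemma transpose_mat_inv_symmetric:
  assumes M: "M \<in> carrier_mat n n" "invertible_mat M" and sym: "M\<^sup>T = M"
  shows "(mat_inv M)\<^sup>T = mat_inv M"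
proof -
  let ?A = "mat_inv M"
  have A: "?A \<in> carrier_mat n n" using M by (rule mat_inv_carrier_mat)
  have "?A\<^sup>T * M = (M\<^sup>T * ?A)\<^sup>T" using A M by (simp add: transpose_mult)
  also have "\<dots> = 1\<^sub>m n" using sym mat_inv_mult_right[OF M] by simp
  finally have left: "?A\<^sup>T * M = 1\<^sub>m n" .
  have "?A\<^sup>T = ?A\<^sup>T * (M * ?A)" using A by (simp add: mat_inv_mult_right[OF M])
  also have "\<dots> = ?A\<^sup>T * M * ?A" using A M by (simp add: assoc_mult_mat[of _ n n _ n _ n])
  also have "\<dots> = ?A" using A by (simp add: left)
  finally show ?thesis .
qed

lemma transpose_smult_mat: "(c \<cdot>\<^sub>m A)\<^sup>T = c \<cdot>\<^sub>m A\<^sup>T"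
  by (intro eq_matI) auto

lemma transpose_regularized_gram:
  fixes B Z :: "'a :: comm_semiring_0 mat"
  assumes "B \<in> carrier_mat l m" "Z \<in> carrier_mat k l"
  shows "(B * B\<^sup>T + \<mu> \<cdot>\<^sub>m (Z\<^sup>T * Z))\<^sup>T = B * B\<^sup>T + \<mu> \<cdot>\<^sub>m (Z\<^sup>T * Z)"
  using assms by (simp add: transpose_add[of _ l l] transpose_mult[of B l m "B\<^sup>T" l]
      transpose_mult[of "Z\<^sup>T" l k Z l] transpose_smult_mat)

lemma transpose_congruence_mat:
  fixes A B :: "'a :: comm_semiring_0 mat"
  assumes "B \<in> carrier_mat l m" "A \<in> carrier_mat l l"
  shows "(B\<^sup>T * A * B)\<^sup>T = B\<^sup>T * A\<^sup>T * B"
proof -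
  have "(B\<^sup>T * A * B)\<^sup>T = B\<^sup>T * (B\<^sup>T * A)\<^sup>T"
    using assms by (intro transpose_mult[of _ m l _ m]) auto
  also have "\<dots> = B\<^sup>T * (A\<^sup>T * B)"
    using assms by (simp add: transpose_mult[of "B\<^sup>T" m l A l])
  finally show ?thesis
    using assms by (simp add: assoc_mult_mat[of "B\<^sup>T" m l _ l B m])
qed

lemma basis_mat_transpose_mult_free_translation:
  assumes D: "D \<in> carrier_mat d m"
    and \<beta>: "\<And>p. p \<in> carrier_vec d \<Longrightarrow> \<beta> p \<in> carrier_vec l"
    and x: "\<And>p. p \<in> carrier_vec d \<Longrightarrow> \<beta> p \<bullet> x = 1"
  shows "(basis_mat l \<beta> D)\<^sup>T *\<^sub>v x = ones_vec m"
proof (rule eq_vecI)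
  fix c assume "c < dim_vec (ones_vec m)"
  then have c: "c < m" by simp
  then have p: "col D c \<in> carrier_vec d" using D by simp
  have "col (basis_mat l \<beta> D) c = \<beta> (col D c)"
    using D c \<beta>[OF p] unfolding basis_mat_def by (intro eq_vecI) auto
  then show "((basis_mat l \<beta> D)\<^sup>T *\<^sub>v x) $ c = ones_vec m $ c"
    using D c x[OF p] by (simp add: basis_mat_def)
qed (use D in \<open>simp add: basis_mat_def\<close>)

lemma smult_mult_mat_vec:
  fixes A :: "'a :: comm_semiring_0 mat"
  assumes "A \<in> carrier_mat nr nc" "v \<in> carrier_vec nc"
  shows "(a \<cdot>\<^sub>m A) *\<^sub>v v = a \<cdot>\<^sub>v (A *\<^sub>v v)"
  using assms by (intro eq_vecI) (auto simp: scalar_prod_def sum_distrib_left ac_simps)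

lemma regularized_gram_mult_free_translation:
  assumes B: "B \<in> carrier_mat l m" and Z: "Z \<in> carrier_mat k l" and \<mu>: "\<mu> \<ge> 0"
    and x: "x \<in> carrier_vec l" and Bx: "B\<^sup>T *\<^sub>v x = ones_vec m"
    and Zx: "\<mu> > 0 \<longrightarrow> Z *\<^sub>v x = 0\<^sub>v k"
  shows "(B * B\<^sup>T + \<mu> \<cdot>\<^sub>m (Z\<^sup>T * Z)) *\<^sub>v x = B *\<^sub>v ones_vec m"
proof -
  have "\<mu> \<cdot>\<^sub>v (Z\<^sup>T *\<^sub>v (Z *\<^sub>v x)) = 0\<^sub>v l"
    using \<mu> Zx Z by (cases "\<mu> = 0") (auto intro!: eq_vecI)
  then have "(\<mu> \<cdot>\<^sub>m (Z\<^sup>T * Z)) *\<^sub>v x = 0\<^sub>v l"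
    using Z x by (simp add: smult_mult_mat_vec[of _ l l] assoc_mult_mat_vec[of _ l k _ l])
  moreover have "(B * B\<^sup>T) *\<^sub>v x = B *\<^sub>v ones_vec m"
    using B x Bx by (simp add: assoc_mult_mat_vec[of _ l m _ l])
  ultimately show ?thesis
    using B Z x by (simp add: add_mult_distrib_mat_vec[of _ l l])
qed

lemma regularized_projection_mult_ones_vec:
  assumes B: "B \<in> carrier_mat l m" and Z: "Z \<in> carrier_mat k l" and \<mu>: "\<mu> \<ge> 0"
    and M_def: "M = B * B\<^sup>T + \<mu> \<cdot>\<^sub>m (Z\<^sup>T * Z)" and inv: "invertible_mat M"
    and x: "x \<in> carrier_vec l" and Bx: "B\<^sup>T *\<^sub>v x = ones_vec m"
    and Zx: "\<mu> > 0 \<longrightarrow> Z *\<^sub>v x = 0\<^sub>v k"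
  shows "B\<^sup>T * mat_inv M * B *\<^sub>v ones_vec m = ones_vec m"
proof -
  have M: "M \<in> carrier_mat l l" using B Z M_def by simp
  have Minv: "mat_inv M \<in> carrier_mat l l" using M inv by (rule mat_inv_carrier_mat)
  have "mat_inv M *\<^sub>v (B *\<^sub>v ones_vec m) = mat_inv M *\<^sub>v (M *\<^sub>v x)"
    using regularized_gram_mult_free_translation[OF B Z \<mu> x Bx Zx] M_def by simp
  also have "\<dots> = (mat_inv M * M) *\<^sub>v x"
    using M Minv x by (simp add: assoc_mult_mat_vec[of _ l l _ l])
  also have "\<dots> = x"
    using x by (simp add: mat_inv_mult_left[OF M inv])
  finally have "mat_inv M *\<^sub>v (B *\<^sub>v ones_vec m) = x" .
  then show ?thesis
    using B Minv Bx by (simp add: assoc_mult_mat_vec[of _ m l _ m] assoc_mult_mat_vec[of _ m l _ l])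
qed

lemma transpose_regularized_projection:
  assumes B: "B \<in> carrier_mat l m" and Z: "Z \<in> carrier_mat k l"
    and M_def: "M = B * B\<^sup>T + \<mu> \<cdot>\<^sub>m (Z\<^sup>T * Z)" and inv: "invertible_mat M"
  shows "(B\<^sup>T * mat_inv M * B)\<^sup>T = B\<^sup>T * mat_inv M * B"
proof -
  have M: "M \<in> carrier_mat l l" using B Z M_def by simp
  have "M\<^sup>T = M" using transpose_regularized_gram[OF B Z] M_def by simp
  then have "(mat_inv M)\<^sup>T = mat_inv M" using M inv by (intro transpose_mat_inv_symmetric)
  then show ?thesis
    using transpose_congruence_mat[OF B mat_inv_carrier_mat[OF M inv]] by simp
qed

lemma sum_mat_mult_vec:
  assumes A: "\<And>i. i \<in> I \<Longrightarrow> A i \<in> carrier_mat nr nc" and v: "v \<in> carrier_vec nc"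
  shows "mat nr nc (\<lambda>(r, c). \<Sum>i\<in>I. A i $$ (r, c)) *\<^sub>v v = vec nr (\<lambda>r. \<Sum>i\<in>I. (A i *\<^sub>v v) $ r)"
proof (rule eq_vecI)
  fix r assume "r < dim_vec (vec nr (\<lambda>r. \<Sum>i\<in>I. (A i *\<^sub>v v) $ r))"
  then have r: "r < nr" by simp
  have "(mat nr nc (\<lambda>(r, c). \<Sum>i\<in>I. A i $$ (r, c)) *\<^sub>v v) $ r
      = (\<Sum>c<nc. \<Sum>i\<in>I. A i $$ (r, c) * v $ c)"
    using r v by (simp add: scalar_prod_def atLeast0LessThan sum_distrib_right)
  also have "\<dots> = (\<Sum>i\<in>I. \<Sum>c<nc. A i $$ (r, c) * v $ c)" by (rule sum.swap)
  also have "\<dots> = (\<Sum>i\<in>I. (A i *\<^sub>v v) $ r)"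
  proof (rule sum.cong)
    fix i assume "i \<in> I"
    show "(\<Sum>c<nc. A i $$ (r, c) * v $ c) = (A i *\<^sub>v v) $ r"
      using A[OF \<open>i \<in> I\<close>] r v by (auto simp: scalar_prod_def atLeast0LessThan)
  qed simp
  finally show "(mat nr nc (\<lambda>(r, c). \<Sum>i\<in>I. A i $$ (r, c)) *\<^sub>v v) $ r
      = vec nr (\<lambda>r. \<Sum>i\<in>I. (A i *\<^sub>v v) $ r) $ r"
    using r by simp
qed simp

lemma transpose_sum_mat_symmetric:
  assumes "\<And>i. i \<in> I \<Longrightarrow> A i \<in> carrier_mat n n" and "\<And>i. i \<in> I \<Longrightarrow> (A i)\<^sup>T = A i"
  shows "(mat n n (\<lambda>(r, c). \<Sum>i\<in>I. A i $$ (r, c)))\<^sup>T = mat n n (\<lambda>(r, c). \<Sum>i\<in>I. A i $$ (r, c))"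
proof (rule eq_matI)
  fix r c assume "r < dim_row (mat n n (\<lambda>(r, c). \<Sum>i\<in>I. A i $$ (r, c)))"
    and "c < dim_col (mat n n (\<lambda>(r, c). \<Sum>i\<in>I. A i $$ (r, c)))"
  then have rc: "r < n" "c < n" by simp_all
  have "A i $$ (c, r) = A i $$ (r, c)" if "i \<in> I" for i
    using assms[OF that] rc by (metis carrier_matD index_transpose_mat(1))
  then show "(mat n n (\<lambda>(r, c). \<Sum>i\<in>I. A i $$ (r, c)))\<^sup>T $$ (r, c)
      = mat n n (\<lambda>(r, c). \<Sum>i\<in>I. A i $$ (r, c)) $$ (r, c)"
    using rc by simp
qed auto

lemma translation_mult_mat_eq_zero:
  assumes P: "P \<in> carrier_mat m nc" and col_sums: "P\<^sup>T *\<^sub>v ones_vec m = 0\<^sub>v nc"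
  shows "mat d m (\<lambda>(r, c). t $ r) * P = 0\<^sub>m d nc"
proof (rule eq_matI)
  fix r c assume "r < dim_row (0\<^sub>m d nc :: real mat)" and "c < dim_col (0\<^sub>m d nc :: real mat)"
  then have rc: "r < d" "c < nc" by simp_all
  have "(\<Sum>i<m. P $$ (i, c)) = 0"
    using arg_cong[OF col_sums, of "\<lambda>v. v $ c"] P rc by (simp add: scalar_prod_def atLeast0LessThan)
  then show "(mat d m (\<lambda>(r, c). t $ r) * P) $$ (r, c) = 0\<^sub>m d nc $$ (r, c)"
    using P rc by (simp add: scalar_prod_def atLeast0LessThan flip: sum_distrib_left)
qed (use P in auto)

lemma quadratic_form_translation_invariant:
  assumes S: "S \<in> carrier_mat d m" and P: "P \<in> carrier_mat m m"
    and row_sums: "P *\<^sub>v ones_vec m = 0\<^sub>v m" and col_sums: "P\<^sup>T *\<^sub>v ones_vec m = 0\<^sub>v m"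
  shows "(S + mat d m (\<lambda>(r, c). t $ r)) * P * (S + mat d m (\<lambda>(r, c). t $ r))\<^sup>T = S * P * S\<^sup>T"
proof -
  define T where "T = mat d m (\<lambda>(r, c). t $ r)"
  have T: "T \<in> carrier_mat d m" by (simp add: T_def)
  have TP: "T * P = 0\<^sub>m d m"
    unfolding T_def using P col_sums by (rule translation_mult_mat_eq_zero)
  have "T * P\<^sup>T = 0\<^sub>m d m"
    unfolding T_def using P row_sums by (intro translation_mult_mat_eq_zero) simp_all
  then have PT: "P * T\<^sup>T = 0\<^sub>m m d"
    using P T by (metis transpose_mult transpose_transpose transpose_carrier_mat zero_transpose_mat)
  have "(S + T) * P * (S + T)\<^sup>T = S * P * (S\<^sup>T + T\<^sup>T)"
    using S T P TP by (simp add: add_mult_distrib_mat[of _ d m] transpose_add[of _ d m])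
  also have "\<dots> = S * P * S\<^sup>T + S * (P * T\<^sup>T)"
    using S T P by (simp add: mult_add_distrib_mat[of _ d m] assoc_mult_mat[of _ d m _ m _ d])
  also have "\<dots> = S * P * S\<^sup>T"
    using S P PT by simp
  finally show ?thesis unfolding T_def .
qed

theorem proposition4:
  fixes d m n :: nat
    and l k :: "nat \<Rightarrow> nat"
    and \<beta> :: "nat \<Rightarrow> real vec \<Rightarrow> real vec"
    and Z :: "nat \<Rightarrow> real mat"
    and \<mu> :: "nat \<Rightarrow> real"
    and D :: "nat \<Rightarrow> real mat"
    and B M Q :: "nat \<Rightarrow> real mat"
    and QII PII :: "real mat"
  assumes beta_dim: "\<And>i p. i < n \<Longrightarrow> p \<in> carrier_vec d \<Longrightarrow> \<beta> i p \<in> carrier_vec (l i)"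
    and Z_dim: "\<And>i. i < n \<Longrightarrow> Z i \<in> carrier_mat (k i) (l i)"
    and mu_nonneg: "\<And>i. i < n \<Longrightarrow> \<mu> i \<ge> 0"
    and D_dim: "\<And>i. i < n \<Longrightarrow> D i \<in> carrier_mat d m"
    and B_def: "\<And>i. B i = basis_mat (l i) (\<beta> i) (D i)"
    and M_def: "\<And>i. M i = B i * (B i)\<^sup>T + \<mu> i \<cdot>\<^sub>m ((Z i)\<^sup>T * Z i)"
    and M_inv: "\<And>i. i < n \<Longrightarrow> invertible_mat (M i)"
    and free_trans: "\<And>i. i < n \<Longrightarrow> contains_free_translations d (l i) (k i) (\<beta> i) (Z i) (\<mu> i)"
    and Q_def: "\<And>i. Q i = (B i)\<^sup>T * mat_inv (M i) * B i"
    and QII_def: "QII = mat m m (\<lambda>(r, c). \<Sum>i<n. Q i $$ (r, c))"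
    and PII_def: "PII = of_nat n \<cdot>\<^sub>m 1\<^sub>m m - QII"
  shows "PII *\<^sub>v ones_vec m = 0\<^sub>v m
    \<and> QII *\<^sub>v ones_vec m = of_nat n \<cdot>\<^sub>v ones_vec m
    \<and> (\<forall>i<n. Q i *\<^sub>v ones_vec m = ones_vec m)
    \<and> (\<forall>S \<in> carrier_mat d m. \<forall>t \<in> carrier_vec d.
         mat_trace ((S + mat d m (\<lambda>(r, c). t $ r)) * PII * (S + mat d m (\<lambda>(r, c). t $ r))\<^sup>T)
           = mat_trace (S * PII * S\<^sup>T))
    \<and> (\<forall>i<n. \<exists>x \<in> carrier_vec (l i). (B i)\<^sup>T *\<^sub>v x = ones_vec m
         \<and> (\<mu> i > 0 \<longrightarrow> Z i *\<^sub>v x = 0\<^sub>v (k i)))"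
proof -
  have B: "B i \<in> carrier_mat (l i) m" if "i < n" for i
    using D_dim[OF that] by (simp add: B_def basis_mat_def)
  have Q: "Q i \<in> carrier_mat m m" if "i < n" for i
    using B[OF that] unfolding Q_def carrier_mat_def by simp
  have translation: "\<exists>x \<in> carrier_vec (l i). (B i)\<^sup>T *\<^sub>v x = ones_vec m
      \<and> (\<mu> i > 0 \<longrightarrow> Z i *\<^sub>v x = 0\<^sub>v (k i))" if i: "i < n" for i
  proof -
    obtain x where x: "x \<in> carrier_vec (l i)" "\<forall>p \<in> carrier_vec d. \<beta> i p \<bullet> x = 1"
      and Zx: "\<mu> i > 0 \<longrightarrow> Z i *\<^sub>v x = 0\<^sub>v (k i)"
      using free_trans[OF i] unfolding contains_free_translations_def by blast
    then have "(B i)\<^sup>T *\<^sub>v x = ones_vec m"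
      unfolding B_def using D_dim[OF i] beta_dim[OF i]
      by (intro basis_mat_transpose_mult_free_translation) auto
    with x Zx show ?thesis by blast
  qed
  have Q_ones: "Q i *\<^sub>v ones_vec m = ones_vec m" if "i < n" for i
    using translation[OF that] regularized_projection_mult_ones_vec[OF B[OF that] Z_dim[OF that]
        mu_nonneg[OF that] M_def M_inv[OF that]]
    by (auto simp: Q_def)
  have Q_sym: "(Q i)\<^sup>T = Q i" if "i < n" for i
    using transpose_regularized_projection[OF B[OF that] Z_dim[OF that] M_def M_inv[OF that]]
    by (simp add: Q_def)
  have QII_ones: "QII *\<^sub>v ones_vec m = of_nat n \<cdot>\<^sub>v ones_vec m"
    using sum_mat_mult_vec[of "{..<n}" Q m m "ones_vec m"] Q Q_ones
    by (auto simp: QII_def intro!: eq_vecI)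
  have QII_sym: "QII\<^sup>T = QII"
    unfolding QII_def using Q Q_sym by (intro transpose_sum_mat_symmetric) auto
  have PII: "PII \<in> carrier_mat m m"
    unfolding PII_def QII_def carrier_mat_def by simp
  have PII_ones: "PII *\<^sub>v ones_vec m = 0\<^sub>v m"
    using QII_ones
    by (auto simp: PII_def QII_def minus_mult_distrib_mat_vec[of _ m m] smult_mult_mat_vec[of _ m m]
        intro!: eq_vecI)
  have PII_sym: "PII\<^sup>T = PII"
    using QII_sym by (simp add: PII_def QII_def transpose_minus[of _ m m] transpose_smult_mat)
  show ?thesis
    using PII_ones QII_ones Q_ones translation PII_sym
      quadratic_form_translation_invariant[OF _ PII PII_ones] by auto
qed

end
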